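(* For a real number $u \geqslant 0$ and an integer $h \geqslant 2$, let $R_2(h,u)$ denote the number of pairs of integers $(m,n) \in (u,u+h]^2$ such that $mn$ is a perfect square. Then \[ R_2(h,u) \ll h \log h, \] where the implied constant is absolute.
   Context: The notation $X \ll Y$ means $|X| \leqslant cY$ for some absolute constant $c>0$. *)

theory Defs
  imports Complex_Main
begin

definition is_square :: "int \<Rightarrow> bool" where
  "is_square x \<longleftrightarrow> (\<exists>k::int. x = k ^ 2)"

definition R2 :: "int \<Rightarrow> real \<Rightarrow> nat" where
  "R2 h u = card {(m::int, n::int).
      u < of_int m \<and> of_int m \<le> u + of_int h \<and>
      u < of_int n \<and> of_int n \<le> u + of_int h \<and> is_square (m * n)}"

end

theory Submission
  imports Defs "HOL-Computational_Algebra.Nth_Powers" "HOL-Analysis.Harmonic_Numbers"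
begin

text \<open>
  If \<open>m \<noteq> n\<close> are positive with \<open>mn\<close> a square, then \<open>m = d x\<^sup>2\<close> and \<open>n = d y\<^sup>2\<close> with
  \<open>x \<noteq> y\<close>, so \<open>d \<le> d \<bar>x\<^sup>2 - y\<^sup>2\<bar> = \<bar>m - n\<bar> < h\<close>. For fixed \<open>d\<close>, the \<open>c\<close> integers
  \<open>x > 0\<close> with \<open>d x\<^sup>2 \<in> (u, u + h]\<close> lie in an interval \<open>[a, b]\<close> with \<open>d (b\<^sup>2 - a\<^sup>2) < h\<close>,
  and \<open>c (c - 1) \<le> (b - a) (b + a)\<close>, so they give fewer than \<open>h / d\<close> off-diagonal pairs.
  Summing over \<open>d \<le> h\<close> and adding the \<open>h\<close> diagonal pairs gives \<open>R\<^sub>2(h, u) \<le> h (1 + H\<^sub>h) \<le> h (2 + log h)\<close>.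
\<close>

lemma square_product_decomposition_nat:
  fixes m n :: nat
  assumes "m > 0" "n > 0" "is_nth_power 2 (m * n)"
  obtains d x y where "d > 0" "m = d * x^2" "n = d * y^2"
proof -
  obtain k where k: "m * n = k^2" using assms(3) by (auto elim: is_nth_powerE)
  define g where "g = gcd m n"
  have "g > 0" using assms g_def by simp
  obtain a b where m: "m = a * g" and n: "n = b * g" and "coprime a b"
    using gcd_coprime_exists[of m n] \<open>g > 0\<close> unfolding g_def by blast
  have k2: "k^2 = g^2 * (a * b)" using k m n by (simp add: power2_eq_square algebra_simps)
  hence "g dvd k" by (simp flip: pow_divides_pow_iff[of 2])
  then obtain t where "k = g * t" by (auto elim: dvdE)
  with k2 \<open>g > 0\<close> have "a * b = t^2" by (auto simp: power_mult_distrib)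
  hence "is_nth_power 2 (a * b)" by (rule is_nth_powerI)
  moreover have "a > 0" "b > 0" using m n assms by auto
  ultimately obtain x y where "a = x^2" "b = y^2"
    using is_nth_power_mult_coprime_natD[OF \<open>coprime a b\<close>] by (metis is_nth_powerE)
  with m n \<open>g > 0\<close> show thesis by (intro that[of g x y]) auto
qed

lemma square_product_decomposition_int:
  fixes m n :: int
  assumes "m > 0" "n > 0" "Defs.is_square (m * n)"
  obtains d x y where "d > 0" "x > 0" "y > 0" "m = d * x^2" "n = d * y^2"
proof -
  obtain k where "m * n = k^2" using assms(3) by (auto simp: Defs.is_square_def)
  hence "nat m * nat n = (nat \<bar>k\<bar>)^2" using assms
    by (metis abs_ge_zero nat_mult_distrib nat_power_eq power2_abs less_imp_le)
  hence "is_nth_power 2 (nat m * nat n)" by (auto intro: is_nth_powerI)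
  then obtain d x y where "d > 0" "nat m = d * x^2" "nat n = d * y^2"
    using square_product_decomposition_nat[of "nat m" "nat n"] assms by auto
  moreover from this assms have "x > 0" "y > 0" by (auto intro!: gr0I)
  ultimately show thesis using assms
    by (intro that[of "int d" "int x" "int y"]) (auto simp flip: of_nat_power of_nat_mult)
qed

lemma harm_le_one_plus_ln:
  assumes "n > 0"
  shows "harm n \<le> 1 + ln (real n)"
  using euler_mascheroni_sequence_decreasing[of 1 n] assms by (simp add: harm_def)

lemma harm_eq_sum_int:
  "harm n = (\<Sum>d\<in>{1..int n}. inverse (of_int d) :: 'a :: real_normed_field)"
proof -
  have "{1..int n} = int ` {1..n}" by (simp add: image_int_atLeastAtMost)
  thus ?thesis by (simp add: harm_def sum.reindex)
qed

lemma card_Times_minus_Id: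
  assumes "finite S"
  shows "card (S \<times> S - Id) = card S * card S - card S"
proof -
  have "S \<times> S - Id = S \<times> S - (\<lambda>x. (x, x)) ` S" by auto
  with assms show ?thesis
    by (simp add: card_Diff_subset card_cartesian_product card_image inj_on_def image_subset_iff)
qed

lemma card_pred_le_Max_squared_minus_Min_squared:
  fixes S :: "int set"
  assumes "finite S" "S \<noteq> {}" "\<And>x. x \<in> S \<Longrightarrow> x > 0"
  shows "int (card S) * (int (card S) - 1) \<le> (Max S)^2 - (Min S)^2"
proof -
  have "S \<subseteq> {Min S..Max S}" using assms by auto
  hence "card S \<le> nat (Max S - Min S + 1)" using card_mono[of "{Min S..Max S}" S] by simp
  moreover have "Min S > 0" "Min S \<le> Max S" "card S > 0" using assms by auto
  ultimately have "int (card S) \<le> Max S - Min S + 1" by (simp add: le_nat_iff)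
  with \<open>Min S > 0\<close> \<open>card S > 0\<close>
  have "int (card S) - 1 \<le> Max S - Min S" "int (card S) \<le> Max S + Min S" by linarith+
  hence "int (card S) * (int (card S) - 1) \<le> (Max S + Min S) * (Max S - Min S)"
    using \<open>card S > 0\<close> by (intro mult_mono) auto
  thus ?thesis by (simp add: power2_eq_square algebra_simps)
qed

definition scaled_square_roots :: "int \<Rightarrow> real \<Rightarrow> int \<Rightarrow> int set" where
  "scaled_square_roots d u h = {x. x > 0 \<and> u < of_int (d * x^2) \<and> of_int (d * x^2) \<le> u + of_int h}"

lemma finite_scaled_square_roots:
  assumes "d > 0"
  shows "finite (scaled_square_roots d u h)"
proof (rule finite_subset)
  show "scaled_square_roots d u h \<subseteq> {1..\<lfloor>u + of_int h\<rfloor>}"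
  proof
    fix x assume x: "x \<in> scaled_square_roots d u h"
    hence "0 < d * x" using assms by (simp add: scaled_square_roots_def)
    hence "x \<le> x * (d * x)" using x by (simp add: scaled_square_roots_def mult_le_cancel_left1)
    hence "x \<le> d * x^2" by (simp add: power2_eq_square algebra_simps)
    hence "of_int x \<le> (of_int (d * x^2) :: real)" by (simp only: of_int_le_iff)
    with x show "x \<in> {1..\<lfloor>u + of_int h\<rfloor>}"
      by (simp only: scaled_square_roots_def mem_Collect_eq atLeastAtMost_iff le_floor_iff) linarith
  qed
qed simp

lemma card_offdiag_scaled_square_roots:
  fixes u :: real
  assumes "d > 0" "h \<ge> 0"
  defines "S \<equiv> scaled_square_roots d u h"
  shows "real (card (S \<times> S - Id)) \<le> of_int h / of_int d"
proof (cases "S = {}")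
  case False
  have "finite S" using assms finite_scaled_square_roots by simp
  have "Max S \<in> S" "Min S \<in> S" using \<open>finite S\<close> False by simp_all
  hence "of_int (d * (Max S)^2) \<le> u + of_int h" "u < of_int (d * (Min S)^2)"
    by (simp_all only: S_def scaled_square_roots_def mem_Collect_eq)
  hence "real_of_int (d * (Max S)^2 - d * (Min S)^2) < of_int h" by simp
  hence "d * (Max S)^2 - d * (Min S)^2 < h" by (simp only: of_int_less_iff)
  moreover have "int (card S) * (int (card S) - 1) * d \<le> ((Max S)^2 - (Min S)^2) * d"
    using card_pred_le_Max_squared_minus_Min_squared[OF \<open>finite S\<close> False] assms
    by (intro mult_right_mono) (auto simp: S_def scaled_square_roots_def)
  ultimately have "int (card S) * (int (card S) - 1) * d < h" by (simp add: algebra_simps)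
  moreover have "int (card (S \<times> S - Id)) = int (card S) * (int (card S) - 1)"
    using \<open>finite S\<close> False by (simp add: card_Times_minus_Id of_nat_diff algebra_simps)
  ultimately have "real (card (S \<times> S - Id)) * of_int d < of_int h"
    by (metis of_int_less_iff of_int_mult of_int_of_nat_eq)
  with assms(1) show ?thesis by (simp add: field_simps)
qed (use assms in simp)

definition square_pairs :: "int \<Rightarrow> real \<Rightarrow> (int \<times> int) set" where
  "square_pairs h u = {(m, n).
      u < of_int m \<and> of_int m \<le> u + of_int h \<and>
      u < of_int n \<and> of_int n \<le> u + of_int h \<and> Defs.is_square (m * n)}"

lemma square_pairs_subset:
  assumes "u \<ge> 0"
  shows "square_pairs h u \<subseteq> (\<lambda>m. (m, m)) ` {\<lfloor>u\<rfloor>+1..\<lfloor>u\<rfloor>+h} \<union>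
           (\<Union>d\<in>{1..h}. (\<lambda>(x, y). (d * x^2, d * y^2)) `
              (scaled_square_roots d u h \<times> scaled_square_roots d u h - Id))"
    (is "_ \<subseteq> ?diagonal \<union> ?off_diagonal")
proof
  fix p assume "p \<in> square_pairs h u"
  then obtain m n where p: "p = (m, n)" and sq: "Defs.is_square (m * n)"
    and m: "u < of_int m" "of_int m \<le> u + of_int h"
    and n: "u < of_int n" "of_int n \<le> u + of_int h"
    by (auto simp: square_pairs_def)
  show "p \<in> ?diagonal \<union> ?off_diagonal"
  proof (cases "m = n")
    case True
    have "m \<in> {\<lfloor>u\<rfloor>+1..\<lfloor>u\<rfloor>+h}" using m by simp linarith
    with True p show ?thesis by blast
  next
    case False
    have "m > 0" "n > 0" using m n assms by linarith+
    then obtain d x y where "d > 0" "x > 0" "y > 0" and mn: "m = d * x^2" "n = d * y^2"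
      using sq by (rule square_product_decomposition_int)
    have "x \<noteq> y" using False mn by auto
    hence "x^2 \<noteq> y^2" using \<open>x > 0\<close> \<open>y > 0\<close> by (simp add: power2_eq_iff_nonneg)
    hence "d * 1 \<le> d * \<bar>x^2 - y^2\<bar>" using \<open>d > 0\<close> by (intro mult_left_mono) auto
    also have "\<dots> = \<bar>m - n\<bar>" using \<open>d > 0\<close> mn by (simp add: abs_mult flip: right_diff_distrib)
    also have "\<bar>m - n\<bar> < h" using m n by linarith
    finally have "d \<in> {1..h}" using \<open>d > 0\<close> by simp
    moreover have "(x, y) \<in> scaled_square_roots d u h \<times> scaled_square_roots d u h - Id"
      using \<open>x \<noteq> y\<close> \<open>x > 0\<close> \<open>y > 0\<close> m n mn by (simp add: scaled_square_roots_def)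
    ultimately have "p \<in> ?off_diagonal"
      unfolding p mn by (intro UN_I[of d] image_eqI[of _ _ "(x, y)"]) simp_all
    thus ?thesis by blast
  qed
qed

lemma card_square_pairs_le:
  assumes "u \<ge> 0" "h \<ge> 0"
  shows "real (card (square_pairs h u)) \<le> of_int h * (1 + harm (nat h))"
proof -
  define S where "S d = scaled_square_roots d u h \<times> scaled_square_roots d u h - Id" for d
  define diagonal where "diagonal = (\<lambda>m. (m, m)) ` {\<lfloor>u\<rfloor>+1..\<lfloor>u\<rfloor>+h}"
  define off_diagonal where "off_diagonal = (\<Union>d\<in>{1..h}. (\<lambda>(x, y). (d * x^2, d * y^2)) ` S d)"
  have fin_S: "finite (S d)" if "d \<in> {1..h}" for d
    using that finite_scaled_square_roots[of d] by (simp add: S_def)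
  have "card (square_pairs h u) \<le> card (diagonal \<union> off_diagonal)"
    using square_pairs_subset[OF assms(1)] fin_S
    by (intro card_mono) (auto simp: diagonal_def off_diagonal_def S_def)
  also have "\<dots> \<le> card diagonal + card off_diagonal" by (rule card_Un_le)
  also have "card diagonal \<le> nat h"
    unfolding diagonal_def using card_image_le[of "{\<lfloor>u\<rfloor>+1..\<lfloor>u\<rfloor>+h}"] by simp
  also have "card off_diagonal \<le> (\<Sum>d\<in>{1..h}. card (S d))"
    unfolding off_diagonal_def
    by (rule order_trans[OF card_UN_le sum_mono]) (auto intro!: card_image_le fin_S)
  finally have "real (card (square_pairs h u)) \<le> of_int h + (\<Sum>d\<in>{1..h}. real (card (S d)))"
    using assms(2) by (simp flip: of_nat_sum)
  also have "\<dots> \<le> of_int h + (\<Sum>d\<in>{1..h}. of_int h * inverse (of_int d))"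
    using card_offdiag_scaled_square_roots assms(2)
    by (intro add_left_mono sum_mono) (simp add: S_def field_simps)
  also have "\<dots> = of_int h * (1 + harm (nat h))"
    using harm_eq_sum_int[of "nat h", where 'a = real] assms(2)
    by (simp add: sum_distrib_left algebra_simps)
  finally show ?thesis .
qed

theorem lemma2p1:
  shows "\<exists>c>0. \<forall>(h::int) (u::real). h \<ge> 2 \<longrightarrow> u \<ge> 0 \<longrightarrow>
           real (R2 h u) \<le> c * of_int h * ln (of_int h)"
proof (intro exI[of _ 4] conjI allI impI)
  fix h :: int and u :: real
  assume "h \<ge> 2" "u \<ge> 0"
  have "ln 2 \<le> ln (of_int h :: real)" using \<open>h \<ge> 2\<close> by simp
  hence "2 / 3 \<le> ln (of_int h :: real)" using ln2_ge_two_thirds by linarith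
  have "real (R2 h u) = real (card (square_pairs h u))"
    by (simp add: R2_def square_pairs_def)
  also have "\<dots> \<le> of_int h * (1 + harm (nat h))"
    using card_square_pairs_le \<open>h \<ge> 2\<close> \<open>u \<ge> 0\<close> by simp
  also have "\<dots> \<le> of_int h * (2 + ln (of_int h))"
    using harm_le_one_plus_ln[of "nat h"] \<open>h \<ge> 2\<close> by (intro mult_left_mono) auto
  also have "\<dots> \<le> 4 * of_int h * ln (of_int h)"
    using \<open>2 / 3 \<le> ln (of_int h)\<close> \<open>h \<ge> 2\<close> by (simp add: algebra_simps)
  finally show "real (R2 h u) \<le> 4 * of_int h * ln (of_int h)" .
qed simp

end
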